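(* Let $L_1$ and $L_2$ be non-nilpotent finite-dimensional Lie algebras over a field $F$. Then $\Gamma_{\mathfrak{N}}(L_1\oplus L_2)$ is connected.
   Context: $\langle a,b\rangle$ denotes the Lie subalgebra generated by $a,b$, and $\mathrm{nil}(L)=\{x\in L\mid \langle h,x\rangle \text{ is nilpotent for all } h\in L\}$. For a finite-dimensional non-nilpotent Lie algebra $L$, the nilpotent graph $\Gamma_{\mathfrak{N}}(L)$ is the simple undirected graph with vertex set $L\setminus\mathrm{nil}(L)$ in which distinct vertices $x,y$ are adjacent iff $\langle x,y\rangle$ is nilpotent. $L_1\oplus L_2$ is the direct sum of Lie algebras with componentwise bracket. *)

theory Defs
  imports Main "HOL.Vector_Spaces" "HOL-Library.Product_Plus"
begin

text \<open>A Lie algebra over a field 'k, carried by the whole type 'v, with scalar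
multiplication s and bracket br.\<close>

definition lie_algebra :: "('k::field \<Rightarrow> 'v::ab_group_add \<Rightarrow> 'v) \<Rightarrow> ('v \<Rightarrow> 'v \<Rightarrow> 'v) \<Rightarrow> bool" where
  "lie_algebra s br \<longleftrightarrow> vector_space s
     \<and> (\<forall>x y z. br (x + y) z = br x z + br y z)
     \<and> (\<forall>x y z. br x (y + z) = br x y + br x z)
     \<and> (\<forall>c x y. br (s c x) y = s c (br x y))
     \<and> (\<forall>c x y. br x (s c y) = s c (br x y))
     \<and> (\<forall>x. br x x = 0)
     \<and> (\<forall>x y z. br x (br y z) + br y (br z x) + br z (br x y) = 0)"

definition fin_dim_lie_algebra :: "('k::field \<Rightarrow> 'v::ab_group_add \<Rightarrow> 'v) \<Rightarrow> ('v \<Rightarrow> 'v \<Rightarrow> 'v) \<Rightarrow> bool" where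
  "fin_dim_lie_algebra s br \<longleftrightarrow> lie_algebra s br \<and> (\<exists>B. finite B \<and> module.span s B = UNIV)"

definition lie_subalgebra :: "('k::field \<Rightarrow> 'v::ab_group_add \<Rightarrow> 'v) \<Rightarrow> ('v \<Rightarrow> 'v \<Rightarrow> 'v) \<Rightarrow> 'v set \<Rightarrow> bool" where
  "lie_subalgebra s br S \<longleftrightarrow> module.subspace s S \<and> (\<forall>x\<in>S. \<forall>y\<in>S. br x y \<in> S)"

definition gen_subalg :: "('k::field \<Rightarrow> 'v::ab_group_add \<Rightarrow> 'v) \<Rightarrow> ('v \<Rightarrow> 'v \<Rightarrow> 'v) \<Rightarrow> 'v set \<Rightarrow> 'v set" where
  "gen_subalg s br A = \<Inter>{S. lie_subalgebra s br S \<and> A \<subseteq> S}"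

primrec lcs :: "('k::field \<Rightarrow> 'v::ab_group_add \<Rightarrow> 'v) \<Rightarrow> ('v \<Rightarrow> 'v \<Rightarrow> 'v) \<Rightarrow> 'v set \<Rightarrow> nat \<Rightarrow> 'v set" where
  "lcs s br S 0 = S"
| "lcs s br S (Suc n) = module.span s {br x y | x y. x \<in> S \<and> y \<in> lcs s br S n}"

definition nilpotent_subalg :: "('k::field \<Rightarrow> 'v::ab_group_add \<Rightarrow> 'v) \<Rightarrow> ('v \<Rightarrow> 'v \<Rightarrow> 'v) \<Rightarrow> 'v set \<Rightarrow> bool" where
  "nilpotent_subalg s br S \<longleftrightarrow> (\<exists>n. lcs s br S n = {0})"

definition lie_nilpotent :: "('k::field \<Rightarrow> 'v::ab_group_add \<Rightarrow> 'v) \<Rightarrow> ('v \<Rightarrow> 'v \<Rightarrow> 'v) \<Rightarrow> bool" where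
  "lie_nilpotent s br \<longleftrightarrow> nilpotent_subalg s br UNIV"

definition nil_set :: "('k::field \<Rightarrow> 'v::ab_group_add \<Rightarrow> 'v) \<Rightarrow> ('v \<Rightarrow> 'v \<Rightarrow> 'v) \<Rightarrow> 'v set" where
  "nil_set s br = {x. \<forall>h. nilpotent_subalg s br (gen_subalg s br {h, x})}"

definition ngraph_adj :: "('k::field \<Rightarrow> 'v::ab_group_add \<Rightarrow> 'v) \<Rightarrow> ('v \<Rightarrow> 'v \<Rightarrow> 'v) \<Rightarrow> 'v \<Rightarrow> 'v \<Rightarrow> bool" where
  "ngraph_adj s br x y \<longleftrightarrow> x \<notin> nil_set s br \<and> y \<notin> nil_set s br \<and> x \<noteq> y
     \<and> nilpotent_subalg s br (gen_subalg s br {x, y})"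

definition ngraph_connected :: "('k::field \<Rightarrow> 'v::ab_group_add \<Rightarrow> 'v) \<Rightarrow> ('v \<Rightarrow> 'v \<Rightarrow> 'v) \<Rightarrow> bool" where
  "ngraph_connected s br \<longleftrightarrow>
     (UNIV - nil_set s br \<noteq> {}) \<and>
     (\<forall>x \<in> UNIV - nil_set s br. \<forall>y \<in> UNIV - nil_set s br.
        \<exists>xs. xs \<noteq> [] \<and> hd xs = x \<and> last xs = y \<and> set xs \<subseteq> UNIV - nil_set s br
           \<and> (\<forall>i. Suc i < length xs \<longrightarrow> ngraph_adj s br (xs ! i) (xs ! Suc i)))"

definition sum_scale :: "('k \<Rightarrow> 'a \<Rightarrow> 'a) \<Rightarrow> ('k \<Rightarrow> 'b \<Rightarrow> 'b) \<Rightarrow> 'k \<Rightarrow> 'a \<times> 'b \<Rightarrow> 'a \<times> 'b" where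
  "sum_scale s1 s2 c p = (s1 c (fst p), s2 c (snd p))"

definition sum_bracket :: "('a \<Rightarrow> 'a \<Rightarrow> 'a) \<Rightarrow> ('b \<Rightarrow> 'b \<Rightarrow> 'b) \<Rightarrow> 'a \<times> 'b \<Rightarrow> 'a \<times> 'b \<Rightarrow> 'a \<times> 'b" where
  "sum_bracket b1 b2 p q = (b1 (fst p) (fst q), b2 (snd p) (snd q))"

end

theory Submission
  imports Defs
begin

text \<open>By Engel's theorem a non-nilpotent finite-dimensional Lie algebra L has nil(L) \<noteq> L,
since otherwise every ad x would be nilpotent; pick a \<notin> nil(L1) and b \<notin> nil(L2).
The subalgebra of L1 \<oplus> L2 generated by two elements lies in the product of the subalgebras
generated by their components and projects onto each of these, so
nil(L1 \<oplus> L2) = nil(L1) \<times> nil(L2). Two elements whose corresponding components are proportional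
generate an abelian subalgebra. Hence every vertex (x1, x2) is joined to (0, b): through (x1, 0)
if x1 \<notin> nil(L1), and through (0, x2) and (a, 0) otherwise.\<close>

lemma (in module) in_span_insert_subspaceE:
  assumes "subspace M" "x \<in> span (insert k M)"
  obtains m a where "m \<in> M" "x = m + a *s k"
proof -
  from assms(2) obtain a where "x - a *s k \<in> span M" by (auto simp: span_insert)
  with assms(1) have "x - a *s k \<in> M" by (metis span_eq_iff)
  then show thesis using that[of "x - a *s k" a] by simp
qed

lemma (in vector_space) finite_dimensional_vector_space_if_finite_span:
  assumes "finite B" "span B = UNIV"
  obtains Basis where "finite_dimensional_vector_space scale Basis"
proof -
  obtain Basis where "Basis \<subseteq> B" "independent Basis" "B \<subseteq> span Basis"
    by (rule maximal_independent_subset)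
  moreover from \<open>B \<subseteq> span Basis\<close> have "span B \<subseteq> span Basis"
    by (simp add: span_minimal)
  ultimately have "finite_dimensional_vector_space scale Basis"
    using assms by unfold_locales (auto intro: finite_subset)
  then show thesis by (rule that)
qed

locale lie_alg =
  fixes s :: "'k::field \<Rightarrow> 'v::ab_group_add \<Rightarrow> 'v" and br :: "'v \<Rightarrow> 'v \<Rightarrow> 'v"
  assumes lie_algebra: "lie_algebra s br"
begin

sublocale vector_space s
  using lie_algebra by (simp add: lie_algebra_def)

lemma bracket_add_left: "br (x + y) z = br x z + br y z"
  and bracket_add_right: "br x (y + z) = br x y + br x z"
  and bracket_scale_left: "br (s c x) y = s c (br x y)"
  and bracket_scale_right: "br x (s c y) = s c (br x y)"
  and bracket_self [simp]: "br x x = 0"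
  and jacobi: "br x (br y z) + br y (br z x) + br z (br x y) = 0"
  using lie_algebra by (simp_all add: lie_algebra_def)

lemma bracket_zero_left [simp]: "br 0 y = 0"
  using bracket_add_left[of 0 0 y] by simp

lemma bracket_zero_right [simp]: "br y 0 = 0"
  using bracket_add_right[of y 0 0] by simp

lemma bracket_antisym: "br x y = - br y x"
proof -
  have "br x x + br y x + (br x y + br y y) = 0"
    using bracket_self[of "x + y"] by (simp only: bracket_add_left bracket_add_right)
  then have "br x y + br y x = 0" by (simp add: add.commute)
  then show ?thesis by (simp add: eq_neg_iff_add_eq_0)
qed

lemma bracket_neg_right: "br x (- y) = - br x y"
  using bracket_add_right[of x y "- y"] by (simp add: eq_neg_iff_add_eq_0 add.commute)

lemma bracket_derivation: "br m (br k v) = br k (br m v) + br (br m k) v"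
proof -
  have "br m (br k v) + br k (br v m) + br v (br m k) = 0" by (rule jacobi)
  moreover have "br k (br v m) = - br k (br m v)"
    by (simp add: bracket_antisym[of v m] bracket_neg_right)
  moreover have "br v (br m k) = - br (br m k) v" by (rule bracket_antisym)
  ultimately show ?thesis by (simp add: algebra_simps)
qed

lemma subspace_if_lie_subalgebra: "lie_subalgebra s br S \<Longrightarrow> subspace S"
  by (simp add: lie_subalgebra_def)

lemma lie_subalgebra_gen_subalg: "lie_subalgebra s br (gen_subalg s br A)"
  unfolding gen_subalg_def lie_subalgebra_def by (auto intro: subspace_Inter)

lemma gen_subalg_superset: "A \<subseteq> gen_subalg s br A"
  unfolding gen_subalg_def by auto

lemma gen_subalg_least: "lie_subalgebra s br S \<Longrightarrow> A \<subseteq> S \<Longrightarrow> gen_subalg s br A \<subseteq> S"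
  unfolding gen_subalg_def by auto

lemma zero_in_gen_subalg: "0 \<in> gen_subalg s br A"
  using lie_subalgebra_gen_subalg subspace_0 subspace_if_lie_subalgebra by blast

lemma bracket_in_lcs_Suc: "x \<in> S \<Longrightarrow> y \<in> lcs s br S n \<Longrightarrow> br x y \<in> lcs s br S (Suc n)"
  by (auto intro: span_base)

lemma lcs_Suc_subset:
  assumes "subspace W" "\<And>x y. x \<in> S \<Longrightarrow> y \<in> lcs s br S n \<Longrightarrow> br x y \<in> W"
  shows "lcs s br S (Suc n) \<subseteq> W"
  unfolding lcs.simps by (rule span_minimal) (use assms in auto)

lemma lcs_subset_zero_mono:
  assumes "lcs s br S n \<subseteq> {0}" "n \<le> m"
  shows "lcs s br S m \<subseteq> {0}"
  using assms(2)
proof (induction m rule: dec_induct)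
  case (step m)
  then show ?case by (intro lcs_Suc_subset) auto
qed (use assms(1) in simp)

lemma nilpotent_subalg_iff:
  assumes "0 \<in> S"
  shows "nilpotent_subalg s br S \<longleftrightarrow> (\<exists>n. lcs s br S n \<subseteq> {0})"
proof -
  have "0 \<in> lcs s br S n" for n
    using assms by (cases n) (auto intro: span_zero)
  then show ?thesis unfolding nilpotent_subalg_def by blast
qed

lemma nilpotent_gen_subalg_span_singleton:
  assumes "x \<in> span {c}" "y \<in> span {c}"
  shows "nilpotent_subalg s br (gen_subalg s br {x, y})"
proof -
  have bracket_0: "br u v = 0" if "u \<in> span {c}" "v \<in> span {c}" for u v
    using that by (auto simp: span_singleton bracket_scale_left bracket_scale_right)
  have "lie_subalgebra s br (span {c})"
    by (simp add: lie_subalgebra_def bracket_0 span_zero)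
  then have G: "gen_subalg s br {x, y} \<subseteq> span {c}"
    using assms by (simp add: gen_subalg_least)
  have "lcs s br (gen_subalg s br {x, y}) (Suc 0) \<subseteq> {0}"
    by (intro lcs_Suc_subset) (use G in \<open>auto intro: bracket_0\<close>)
  then show ?thesis
    by (auto simp: nilpotent_subalg_iff zero_in_gen_subalg simp del: lcs.simps)
qed

lemma ad_power_vanishes_if_nilpotent_gen_subalg:
  assumes "nilpotent_subalg s br (gen_subalg s br {x, y})"
  obtains n where "(br x ^^ n) y = 0"
proof -
  let ?G = "gen_subalg s br {x, y}"
  have "x \<in> ?G" "y \<in> ?G" using gen_subalg_superset[of "{x, y}"] by auto
  then have "(br x ^^ n) y \<in> lcs s br ?G n" for n
    by (induction n) (auto intro!: span_base)
  moreover obtain n where "lcs s br ?G n = {0}"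
    using assms unfolding nilpotent_subalg_def by blast
  ultimately show thesis using that by blast
qed

lemma lie_subalgebra_span_insert:
  assumes "lie_subalgebra s br M" "\<And>m. m \<in> M \<Longrightarrow> br m k \<in> M"
  shows "lie_subalgebra s br (span (insert k M))"
proof -
  have M: "subspace M" using assms(1) by (rule subspace_if_lie_subalgebra)
  have "br x y \<in> M" if x: "x \<in> span (insert k M)" and y: "y \<in> span (insert k M)" for x y
  proof -
    obtain mx a where mx: "mx \<in> M" "x = mx + s a k"
      using in_span_insert_subspaceE[OF M x] .
    obtain my b where my: "my \<in> M" "y = my + s b k"
      using in_span_insert_subspaceE[OF M y] .
    have "br x y = br mx my - s a (br my k) + s b (br mx k)"
      unfolding mx(2) my(2)
      by (simp add: bracket_add_left bracket_add_right bracket_scale_left bracket_scale_right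
          bracket_antisym[of k my] scale_right_diff_distrib)
    moreover have "br mx my \<in> M"
      using assms(1) mx(1) my(1) by (simp add: lie_subalgebra_def)
    ultimately show ?thesis
      using assms(2) mx(1) my(1) M by (simp add: subspace_diff subspace_add subspace_scale)
  qed
  then show ?thesis
    using span_superset[of "insert k M"] by (auto simp: lie_subalgebra_def)
qed

end

section \<open>Engel's theorem\<close>

lemma ex_last_iterate_outside:
  assumes "u \<notin> W" "(f ^^ n) u \<in> W"
  obtains j where "(f ^^ j) u \<notin> W" "f ((f ^^ j) u) \<in> W"
proof -
  have "\<exists>j. (f ^^ j) u \<notin> W \<and> f ((f ^^ j) u) \<in> W"
    using assms(2)
  proof (induction n)
    case 0
    with assms(1) show ?case by simp
  next
    case (Suc n)
    show ?case
    proof (cases "(f ^^ n) u \<in> W")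
      case True
      then show ?thesis by (rule Suc.IH)
    next
      case False
      with Suc.prems show ?thesis by auto
    qed
  qed
  with that show thesis by blast
qed

text \<open>The inductive step of Engel's lemma for K = M + F k: the vectors of V that M maps into W
form an ad k-invariant set, and the last iterate of u under ad k outside W is mapped into W by all
of K.\<close>

lemma (in lie_alg) ex_annihilated_vector_span_insert:
  assumes "subspace M" "subspace W"
    and "\<And>m. m \<in> M \<Longrightarrow> br m k \<in> M"
    and "\<And>v. v \<in> V \<Longrightarrow> br k v \<in> V" "\<And>w. w \<in> W \<Longrightarrow> br k w \<in> W"
    and "u \<in> V - W" "\<And>m. m \<in> M \<Longrightarrow> br m u \<in> W" "(br k ^^ n) u = 0"
  shows "\<exists>v \<in> V - W. \<forall>x \<in> span (insert k M). br x v \<in> W"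
proof -
  define U where "U = {v \<in> V. \<forall>m\<in>M. br m v \<in> W}"
  have "br k v \<in> U" if "v \<in> U" for v
  proof -
    have "br m (br k v) \<in> W" if "m \<in> M" for m
    proof -
      have "br k (br m v) \<in> W" "br (br m k) v \<in> W"
        using assms(3,5) \<open>v \<in> U\<close> that by (auto simp: U_def)
      then show ?thesis
        using assms(2) by (simp add: bracket_derivation[of m k v] subspace_add)
    qed
    then show ?thesis using assms(4) that by (simp add: U_def)
  qed
  then have iterates_in_U: "(br k ^^ j) u \<in> U" for j
    using assms(6,7) by (induction j) (auto simp: U_def)
  have "(br k ^^ n) u \<in> W" using assms(8) subspace_0[OF assms(2)] by simp
  with assms(6) obtain j where j: "(br k ^^ j) u \<notin> W" "br k ((br k ^^ j) u) \<in> W"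
    using ex_last_iterate_outside[of u W] by blast
  have "br x ((br k ^^ j) u) \<in> W" if x: "x \<in> span (insert k M)" for x
  proof -
    obtain m a where "m \<in> M" "x = m + s a k"
      using in_span_insert_subspaceE[OF assms(1) x] .
    then show ?thesis
      using iterates_in_U[of j] j(2) assms(2)
      by (auto simp: U_def bracket_add_left bracket_scale_left subspace_add subspace_scale)
  qed
  then show ?thesis using iterates_in_U[of j] j(1) by (auto simp: U_def)
qed

locale fin_dim_lie_alg = lie_alg s br + finite_dimensional_vector_space s Basis
  for s :: "'k::field \<Rightarrow> 'v::ab_group_add \<Rightarrow> 'v" and br and Basis
begin

lemma dim_less_if_psubset:
  assumes "subspace A" "subspace B" "A \<subset> B"
  shows "dim A < dim B"
  using assms dim_psubset by (metis span_eq_iff)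

lemma ex_maximal_proper_subalgebra:
  assumes "lie_subalgebra s br K" "K \<noteq> {0}"
  obtains M where "lie_subalgebra s br M" "M \<subset> K"
    "\<And>M'. lie_subalgebra s br M' \<Longrightarrow> M' \<subset> K \<Longrightarrow> dim M' \<le> dim M"
proof -
  define P where "P M \<longleftrightarrow> lie_subalgebra s br M \<and> M \<subset> K" for M
  have K: "subspace K" using assms(1) by (rule subspace_if_lie_subalgebra)
  then have "P {0}"
    using assms(2) subspace_0 by (auto simp: P_def lie_subalgebra_def subspace_single_0)
  moreover have "\<forall>M. P M \<longrightarrow> dim M < dim K"
    using K dim_less_if_psubset subspace_if_lie_subalgebra by (auto simp: P_def)
  ultimately obtain M where "P M" "\<forall>M'. P M' \<longrightarrow> dim M' \<le> dim M"
    using ex_has_greatest_nat[of P "{0}" dim "dim K"] by blast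
  then show thesis using that[of M] unfolding P_def by blast
qed

end

locale ad_nilpotent_lie_alg = fin_dim_lie_alg +
  assumes ad_nilpotent: "\<exists>n. (br x ^^ n) y = 0"
begin

lemma engel_ex_annihilated_vector:
  assumes "lie_subalgebra s br K" "subspace V" "subspace W" "W \<subset> V"
    and "\<And>k v. k \<in> K \<Longrightarrow> v \<in> V \<Longrightarrow> br k v \<in> V"
    and "\<And>k w. k \<in> K \<Longrightarrow> w \<in> W \<Longrightarrow> br k w \<in> W"
  shows "\<exists>v \<in> V - W. \<forall>k \<in> K. br k v \<in> W"
  using assms
proof (induction "dim K" arbitrary: K V W rule: less_induct)
  case less
  have K: "subspace K" using less.prems(1) by (rule subspace_if_lie_subalgebra)
  show ?case
  proof (cases "K = {0}")
    case True
    then show ?thesis using less.prems(4) subspace_0[OF less.prems(3)] by auto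
  next
    case False
    obtain M where M: "lie_subalgebra s br M" "M \<subset> K"
      and M_max: "\<And>M'. lie_subalgebra s br M' \<Longrightarrow> M' \<subset> K \<Longrightarrow> dim M' \<le> dim M"
      using ex_maximal_proper_subalgebra[OF less.prems(1) False] by blast
    have M_sub: "subspace M" using M(1) by (rule subspace_if_lie_subalgebra)
    have dim_M: "dim M < dim K" using dim_less_if_psubset[OF M_sub K M(2)] .
    \<comment> \<open>induction hypothesis for M acting on K modulo M; then maximality forces K = M + F k0\<close>
    obtain k0 where k0: "k0 \<in> K - M" "\<And>m. m \<in> M \<Longrightarrow> br m k0 \<in> M"
    proof -
      have "\<exists>v\<in>K - M. \<forall>m\<in>M. br m v \<in> M"
        using less.prems(1) M by (intro less.hyps[OF dim_M M(1) K M_sub M(2)])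
          (auto simp: lie_subalgebra_def)
      with that show thesis by blast
    qed
    define M' where "M' = span (insert k0 M)"
    have "M \<subset> M'"
      using k0(1) span_superset[of "insert k0 M"] unfolding M'_def by blast
    then have "dim M < dim M'"
      unfolding M'_def by (intro dim_less_if_psubset[OF M_sub]) auto
    moreover have "M' \<subseteq> K"
      using k0(1) M(2) K unfolding M'_def by (intro span_minimal) auto
    moreover have "lie_subalgebra s br M'"
      unfolding M'_def using M(1) k0(2) by (rule lie_subalgebra_span_insert)
    ultimately have K_eq: "K = M'"
      using M_max[of M'] by fastforce
    obtain u where "u \<in> V - W" "\<And>m. m \<in> M \<Longrightarrow> br m u \<in> W"
      using less.hyps[OF dim_M M(1) less.prems(2-4)] less.prems(5,6) M(2) by blast
    moreover obtain n where "(br k0 ^^ n) u = 0"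
      using ad_nilpotent by blast
    ultimately have "\<exists>v \<in> V - W. \<forall>x \<in> span (insert k0 M). br x v \<in> W"
      using M_sub less.prems(3,5,6) k0 by (intro ex_annihilated_vector_span_insert) auto
    then show ?thesis unfolding K_eq M'_def .
  qed
qed

lemma lcs_UNIV_subset_invariant_subspace:
  assumes "subspace W" "\<And>x w. w \<in> W \<Longrightarrow> br x w \<in> W"
  shows "\<exists>n. lcs s br UNIV n \<subseteq> W"
  using assms
proof (induction "dimension - dim W" arbitrary: W rule: less_induct)
  case less
  show ?case
  proof (cases "W = UNIV")
    case True
    then show ?thesis by (metis lcs.simps(1) order_refl)
  next
    case False
    have "lie_subalgebra s br UNIV" by (simp add: lie_subalgebra_def)
    then obtain v where v: "v \<notin> W" "\<And>x. br x v \<in> W"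
      using engel_ex_annihilated_vector[of UNIV UNIV W] less.prems False by auto
    define W' where "W' = span (insert v W)"
    have bracket_W': "br x w \<in> W" if "w \<in> W'" for x w
    proof -
      obtain w0 a where "w0 \<in> W" "w = w0 + s a v"
        using in_span_insert_subspaceE[OF less.prems(1)] \<open>w \<in> W'\<close> unfolding W'_def by blast
      then show ?thesis
        using less.prems v(2)
        by (simp add: bracket_add_right bracket_scale_right subspace_add subspace_scale)
    qed
    have "W \<subset> W'"
      using v(1) span_superset[of "insert v W"] unfolding W'_def by blast
    then have "dim W < dim W'"
      unfolding W'_def by (intro dim_less_if_psubset[OF less.prems(1)]) auto
    then have "dimension - dim W' < dimension - dim W"
      using dim_subset_UNIV[of W'] by linarith
    moreover have "br x w \<in> W'" if "w \<in> W'" for x w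
      using bracket_W'[OF that] \<open>W \<subset> W'\<close> by blast
    ultimately obtain n where "lcs s br UNIV n \<subseteq> W'"
      using less.hyps[of W'] unfolding W'_def by auto
    then have "lcs s br UNIV (Suc n) \<subseteq> W"
      using less.prems(1) bracket_W' by (intro lcs_Suc_subset) auto
    then show ?thesis by blast
  qed
qed

theorem engel: "lie_nilpotent s br"
proof -
  obtain n where "lcs s br UNIV n \<subseteq> {0}"
    using lcs_UNIV_subset_invariant_subspace[of "{0}"] by auto
  then show ?thesis
    unfolding lie_nilpotent_def by (auto simp: nilpotent_subalg_iff)
qed

end

lemma (in lie_alg) nil_set_neq_UNIV:
  assumes "fin_dim_lie_algebra s br" "\<not> lie_nilpotent s br"
  shows "nil_set s br \<noteq> UNIV"
proof
  assume "nil_set s br = UNIV"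
  then have "\<exists>n. (br x ^^ n) y = 0" for x y
    using ad_power_vanishes_if_nilpotent_gen_subalg unfolding nil_set_def by blast
  moreover obtain B where "finite B" "span B = UNIV"
    using assms(1) by (auto simp: fin_dim_lie_algebra_def)
  then obtain Basis where "finite_dimensional_vector_space s Basis"
    by (rule finite_dimensional_vector_space_if_finite_span)
  ultimately interpret ad_nilpotent_lie_alg s br Basis
    by (intro_locales; auto simp: ad_nilpotent_lie_alg_axioms_def finite_dimensional_vector_space_def)
  show False using engel assms(2) by blast
qed

section \<open>Walks in the nilpotent graph\<close>

lemma ngraph_adj_commute: "ngraph_adj s br x y \<longleftrightarrow> ngraph_adj s br y x"
  by (auto simp: ngraph_adj_def insert_commute)

lemma walk_if_rtranclp_ngraph_adj:
  assumes "(ngraph_adj s br)\<^sup>*\<^sup>* x y" "x \<notin> nil_set s br"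
  shows "\<exists>xs. xs \<noteq> [] \<and> hd xs = x \<and> last xs = y \<and> set xs \<subseteq> UNIV - nil_set s br
           \<and> (\<forall>i. Suc i < length xs \<longrightarrow> ngraph_adj s br (xs ! i) (xs ! Suc i))"
  using assms
proof (induction rule: converse_rtranclp_induct)
  case base
  then show ?case by (intro exI[of _ "[y]"]) auto
next
  case (step x z)
  then obtain zs where zs: "zs \<noteq> []" "hd zs = z" "last zs = y" "set zs \<subseteq> UNIV - nil_set s br"
      "\<forall>i. Suc i < length zs \<longrightarrow> ngraph_adj s br (zs ! i) (zs ! Suc i)"
    by (auto simp: ngraph_adj_def)
  have "\<forall>i. Suc i < length (x # zs) \<longrightarrow> ngraph_adj s br ((x # zs) ! i) ((x # zs) ! Suc i)"
    using zs(1,2,5) step.hyps(1) by (auto simp: nth_Cons hd_conv_nth split: nat.split)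
  with zs step.prems show ?case by (intro exI[of _ "x # zs"]) auto
qed

lemma ngraph_connected_if_hub:
  assumes "h \<notin> nil_set s br" "\<And>x. x \<notin> nil_set s br \<Longrightarrow> (ngraph_adj s br)\<^sup>*\<^sup>* x h"
  shows "ngraph_connected s br"
proof -
  have "symp (ngraph_adj s br)\<^sup>*\<^sup>*"
    by (intro symp_rtranclp sympI) (simp add: ngraph_adj_commute)
  then have "(ngraph_adj s br)\<^sup>*\<^sup>* x y" if "x \<notin> nil_set s br" "y \<notin> nil_set s br" for x y
    using assms(2)[OF that(1)] assms(2)[OF that(2)] by (metis rtranclp_trans sympD)
  then show ?thesis
    using assms(1) walk_if_rtranclp_ngraph_adj unfolding ngraph_connected_def by blast
qed

lemma rtranclp_ngraph_adj_if_nilpotent: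
  assumes "x \<notin> nil_set s br" "y \<notin> nil_set s br"
    and "nilpotent_subalg s br (gen_subalg s br {x, y})"
  shows "(ngraph_adj s br)\<^sup>*\<^sup>* x y"
  using assms by (cases "x = y") (auto simp: ngraph_adj_def)

section \<open>Direct sums\<close>

lemma nilpotent_gen_subalg_image:
  fixes s :: "'k::field \<Rightarrow> 'v::ab_group_add \<Rightarrow> 'v" and s' :: "'k \<Rightarrow> 'w::ab_group_add \<Rightarrow> 'w"
  assumes "lie_alg s br" "lie_alg s' br'" "module_hom s s' f"
    and f_bracket: "\<And>x y. f (br x y) = br' (f x) (f y)"
    and "nilpotent_subalg s br (gen_subalg s br {u, v})"
  shows "nilpotent_subalg s' br' (gen_subalg s' br' {f u, f v})"
proof -
  interpret A: lie_alg s br by fact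
  interpret B: lie_alg s' br' by fact
  interpret f: module_hom s s' f by fact
  define G where "G = gen_subalg s br {u, v}"
  define G' where "G' = gen_subalg s' br' {f u, f v}"
  have "lie_subalgebra s br G"
    unfolding G_def by (rule A.lie_subalgebra_gen_subalg)
  then have "lie_subalgebra s' br' (f ` G)"
    using f.subspace_image[OF A.subspace_if_lie_subalgebra]
    by (fastforce simp: lie_subalgebra_def simp flip: f_bracket)
  then have G'_sub: "G' \<subseteq> f ` G"
    unfolding G'_def using A.gen_subalg_superset[of "{u, v}"] G_def
    by (intro B.gen_subalg_least) auto
  have "lcs s' br' G' n \<subseteq> f ` lcs s br G n" for n
  proof (induction n)
    case 0
    then show ?case using G'_sub by simp
  next
    case (Suc n)
    show ?case
    proof (rule B.lcs_Suc_subset)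
      show "B.subspace (f ` lcs s br G (Suc n))"
        by (simp add: f.subspace_image)
      fix x y assume "x \<in> G'" "y \<in> lcs s' br' G' n"
      then obtain x0 y0 where "x0 \<in> G" "y0 \<in> lcs s br G n" "x = f x0" "y = f y0"
        using G'_sub Suc.IH by blast
      then show "br' x y \<in> f ` lcs s br G (Suc n)"
        by (metis A.bracket_in_lcs_Suc f_bracket image_eqI)
    qed
  qed
  moreover obtain n where "lcs s br G n = {0}"
    using assms(5) unfolding G_def nilpotent_subalg_def by blast
  ultimately have "lcs s' br' G' n \<subseteq> {0}" by force
  then show ?thesis
    unfolding G'_def using B.nilpotent_subalg_iff B.zero_in_gen_subalg by blast
qed

lemma lie_algebra_sum:
  assumes "lie_algebra s1 b1" "lie_algebra s2 b2"
  shows "lie_algebra (sum_scale s1 s2) (sum_bracket b1 b2)"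
proof -
  have "vector_space (sum_scale s1 s2)"
    using assms unfolding lie_algebra_def vector_space_def sum_scale_def by (simp add: prod_eq_iff)
  then show ?thesis
    using assms unfolding lie_algebra_def sum_scale_def sum_bracket_def by (simp add: prod_eq_iff)
qed

locale lie_alg_pair = L1: lie_alg s1 b1 + L2: lie_alg s2 b2
  for s1 :: "'k::field \<Rightarrow> 'a::ab_group_add \<Rightarrow> 'a" and b1
    and s2 :: "'k \<Rightarrow> 'b::ab_group_add \<Rightarrow> 'b" and b2
begin

sublocale S: lie_alg "sum_scale s1 s2" "sum_bracket b1 b2"
  using lie_algebra_sum[OF L1.lie_algebra L2.lie_algebra] by unfold_locales

abbreviation s :: "'k \<Rightarrow> 'a \<times> 'b \<Rightarrow> 'a \<times> 'b" where "s \<equiv> sum_scale s1 s2"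
abbreviation br :: "'a \<times> 'b \<Rightarrow> 'a \<times> 'b \<Rightarrow> 'a \<times> 'b" where "br \<equiv> sum_bracket b1 b2"

lemma subspace_Times: "L1.subspace X \<Longrightarrow> L2.subspace Y \<Longrightarrow> S.subspace (X \<times> Y)"
  unfolding module.subspace_def[OF L1.module_axioms] module.subspace_def[OF L2.module_axioms]
    module.subspace_def[OF S.module_axioms]
  by (auto simp: sum_scale_def zero_prod_def)

lemma lcs_subset_Times:
  assumes "S \<subseteq> S1 \<times> S2"
  shows "lcs s br S n \<subseteq> lcs s1 b1 S1 n \<times> lcs s2 b2 S2 n"
proof (induction n)
  case 0
  then show ?case using assms by simp
next
  case (Suc n)
  show ?case
  proof (rule S.lcs_Suc_subset)
    show "S.subspace (lcs s1 b1 S1 (Suc n) \<times> lcs s2 b2 S2 (Suc n))"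
      by (simp add: subspace_Times)
    fix x y assume "x \<in> S" "y \<in> lcs s br S n"
    then have "fst x \<in> S1" "snd x \<in> S2" "fst y \<in> lcs s1 b1 S1 n" "snd y \<in> lcs s2 b2 S2 n"
      using assms Suc.IH by (auto simp: mem_Times_iff)
    then show "br x y \<in> lcs s1 b1 S1 (Suc n) \<times> lcs s2 b2 S2 (Suc n)"
      by (simp add: sum_bracket_def L1.bracket_in_lcs_Suc L2.bracket_in_lcs_Suc del: lcs.simps)
  qed
qed

lemma nilpotent_gen_subalg_Pair:
  assumes "nilpotent_subalg s1 b1 (gen_subalg s1 b1 {u1, v1})"
    and "nilpotent_subalg s2 b2 (gen_subalg s2 b2 {u2, v2})"
  shows "nilpotent_subalg s br (gen_subalg s br {(u1, u2), (v1, v2)})"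
proof -
  define G1 where "G1 = gen_subalg s1 b1 {u1, v1}"
  define G2 where "G2 = gen_subalg s2 b2 {u2, v2}"
  define G where "G = gen_subalg s br {(u1, u2), (v1, v2)}"
  have "lie_subalgebra s1 b1 G1" "lie_subalgebra s2 b2 G2"
    unfolding G1_def G2_def by (rule L1.lie_subalgebra_gen_subalg L2.lie_subalgebra_gen_subalg)+
  then have "lie_subalgebra s br (G1 \<times> G2)"
    using subspace_Times L1.subspace_if_lie_subalgebra L2.subspace_if_lie_subalgebra
    by (auto simp: lie_subalgebra_def sum_bracket_def)
  then have G_sub: "G \<subseteq> G1 \<times> G2"
    unfolding G_def G1_def G2_def
    using L1.gen_subalg_superset[of "{u1, v1}"] L2.gen_subalg_superset[of "{u2, v2}"]
    by (intro S.gen_subalg_least) auto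
  obtain n1 n2 where "lcs s1 b1 G1 n1 \<subseteq> {0}" "lcs s2 b2 G2 n2 \<subseteq> {0}"
    using assms unfolding G1_def G2_def nilpotent_subalg_def by blast
  then have "lcs s1 b1 G1 (max n1 n2) \<subseteq> {0}" "lcs s2 b2 G2 (max n1 n2) \<subseteq> {0}"
    by (simp_all add: L1.lcs_subset_zero_mono L2.lcs_subset_zero_mono)
  with lcs_subset_Times[OF G_sub, of "max n1 n2"] have "lcs s br G (max n1 n2) \<subseteq> {0}"
    by (fastforce simp: zero_prod_def)
  then show ?thesis
    unfolding G_def using S.nilpotent_subalg_iff S.zero_in_gen_subalg by blast
qed

lemma nil_set_sum: "nil_set s br = nil_set s1 b1 \<times> nil_set s2 b2"
proof (intro equalityI subsetI)
  fix x assume "x \<in> nil_set s br"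
  then have nil: "nilpotent_subalg s br (gen_subalg s br {h, x})" for h
    unfolding nil_set_def by blast
  have "module_hom s s1 fst" "module_hom s s2 snd"
    using L1.vector_space_axioms L2.vector_space_axioms S.vector_space_axioms
    unfolding module_hom_def module_hom_axioms_def module_iff_vector_space
    by (simp_all add: sum_scale_def)
  from nilpotent_gen_subalg_image[OF S.lie_alg_axioms L1.lie_alg_axioms this(1) _ nil]
    nilpotent_gen_subalg_image[OF S.lie_alg_axioms L2.lie_alg_axioms this(2) _ nil]
  show "x \<in> nil_set s1 b1 \<times> nil_set s2 b2"
    unfolding nil_set_def by (auto simp: sum_bracket_def mem_Times_iff)
next
  fix x assume "x \<in> nil_set s1 b1 \<times> nil_set s2 b2"
  then show "x \<in> nil_set s br"
    using nilpotent_gen_subalg_Pair[of "fst h" "fst x" "snd h" "snd x" for h]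
    by (auto simp: nil_set_def mem_Times_iff)
qed

lemma ngraph_connected_sum:
  assumes a: "a \<notin> nil_set s1 b1" and b: "b \<notin> nil_set s2 b2"
  shows "ngraph_connected s br"
proof (rule ngraph_connected_if_hub)
  have joined: "(ngraph_adj s br)\<^sup>*\<^sup>* (x1, x2) (y1, y2)"
    if "(x1, x2) \<notin> nil_set s br" "(y1, y2) \<notin> nil_set s br"
      and "x1 \<in> L1.span {c1}" "y1 \<in> L1.span {c1}" "x2 \<in> L2.span {c2}" "y2 \<in> L2.span {c2}"
    for x1 x2 y1 y2 c1 c2
    using that by (intro rtranclp_ngraph_adj_if_nilpotent nilpotent_gen_subalg_Pair
        L1.nilpotent_gen_subalg_span_singleton L2.nilpotent_gen_subalg_span_singleton)
  have spans: "x \<in> L1.span {x}" "0 \<in> L1.span {x}" "y \<in> L2.span {y}" "0 \<in> L2.span {y}"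
    for x y by (simp_all add: L1.span_base L1.span_zero L2.span_base L2.span_zero)
  show "(0, b) \<notin> nil_set s br"
    using b by (simp add: nil_set_sum)
  fix x assume "x \<notin> nil_set s br"
  then obtain x1 x2 where x: "x = (x1, x2)" and "x1 \<notin> nil_set s1 b1 \<or> x2 \<notin> nil_set s2 b2"
    by (cases x) (auto simp: nil_set_sum)
  then consider "x1 \<notin> nil_set s1 b1" | "x2 \<notin> nil_set s2 b2" by blast
  then show "(ngraph_adj s br)\<^sup>*\<^sup>* x (0, b)"
  proof cases
    case 1
    have "(ngraph_adj s br)\<^sup>*\<^sup>* (x1, x2) (x1, 0)"
      using 1 by (intro joined[of _ _ _ _ x1 x2]) (auto simp: nil_set_sum spans)
    also have "(ngraph_adj s br)\<^sup>*\<^sup>* (x1, 0) (0, b)"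
      using 1 b by (intro joined[of _ _ _ _ x1 b]) (auto simp: nil_set_sum spans)
    finally show ?thesis unfolding x .
  next
    case 2
    have "(ngraph_adj s br)\<^sup>*\<^sup>* (x1, x2) (0, x2)"
      using 2 by (intro joined[of _ _ _ _ x1 x2]) (auto simp: nil_set_sum spans)
    also have "(ngraph_adj s br)\<^sup>*\<^sup>* (0, x2) (a, 0)"
      using 2 a by (intro joined[of _ _ _ _ a x2]) (auto simp: nil_set_sum spans)
    also have "(ngraph_adj s br)\<^sup>*\<^sup>* (a, 0) (0, b)"
      using a b by (intro joined[of _ _ _ _ a b]) (auto simp: nil_set_sum spans)
    finally show ?thesis unfolding x .
  qed
qed

end

theorem proposition5p3:
  fixes s1 :: "'k::field \<Rightarrow> 'a::ab_group_add \<Rightarrow> 'a" and b1 :: "'a \<Rightarrow> 'a \<Rightarrow> 'a"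
    and s2 :: "'k \<Rightarrow> 'b::ab_group_add \<Rightarrow> 'b" and b2 :: "'b \<Rightarrow> 'b \<Rightarrow> 'b"
  assumes "fin_dim_lie_algebra s1 b1" and "fin_dim_lie_algebra s2 b2"
    and "\<not> lie_nilpotent s1 b1" and "\<not> lie_nilpotent s2 b2"
  shows "ngraph_connected (sum_scale s1 s2) (sum_bracket b1 b2)"
proof -
  interpret lie_alg_pair s1 b1 s2 b2
    using assms(1,2) by (simp add: lie_alg_pair_def lie_alg_def fin_dim_lie_algebra_def)
  obtain a where "a \<notin> nil_set s1 b1"
    using L1.nil_set_neq_UNIV assms(1,3) by blast
  moreover obtain b where "b \<notin> nil_set s2 b2"
    using L2.nil_set_neq_UNIV assms(2,4) by blast
  ultimately show ?thesis by (rule ngraph_connected_sum)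
qed

end
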